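(* Let $s$ be a Sturmian word and $t\in\{a,b\}^{\omega}$ with $R(t)=s$, where $R$ is the morphism $R(a)=a$, $R(b)=ba$. Suppose that either (1) the first letter of $t$ is $b$, or (2) $s$ admits a factorization $s=U_1U_2\cdots U_n\cdots$ where each $U_i$ is a non-empty prefix of $s$ ending in the letter $a$ and $r_s(U_i)=r_s(U_j)$ for all $i,j\ge1$. Then $t$ is a Sturmian word.
   Context: A Sturmian word is an infinite word $s\in\{a,b\}^{\omega}$ that is aperiodic (not ultimately periodic) and balanced: for all factors $u,v$ of $s$ with $|u|=|v|$ one has $||u|_x-|v|_x|\le 1$ for $x\in\{a,b\}$, where $|u|_x$ is the number of occurrences of $x$ in $u$. A non-empty factor $w$ of $s$ is rich in the letter $z\in\{a,b\}$ if there is a factor $v$ of $s$ with $|v|=|w|$ and $|w|_z>|v|_z$; every non-empty factor of a Sturmian word is rich in exactly one letter, and $r_s(w)\in\{a,b\}$ denotes that letter. *)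

theory Defs
  imports Main
begin

datatype letter = a | b

type_synonym iword = "nat \<Rightarrow> letter"

definition cnt :: "letter list \<Rightarrow> letter \<Rightarrow> nat" where
  "cnt w x = length (filter (\<lambda>y. y = x) w)"

definition factor :: "letter list \<Rightarrow> iword \<Rightarrow> bool" where
  "factor w s \<longleftrightarrow> (\<exists>i. w = map s [i..<i + length w])"

definition ult_periodic :: "iword \<Rightarrow> bool" where
  "ult_periodic s \<longleftrightarrow> (\<exists>p>0. \<exists>N. \<forall>n\<ge>N. s (n + p) = s n)"

definition balanced :: "iword \<Rightarrow> bool" where
  "balanced s \<longleftrightarrow> (\<forall>u v x. factor u s \<longrightarrow> factor v s \<longrightarrow> length u = length v \<longrightarrow>
      \<bar>int (cnt u x) - int (cnt v x)\<bar> \<le> 1)"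

definition sturmian :: "iword \<Rightarrow> bool" where
  "sturmian s \<longleftrightarrow> \<not> ult_periodic s \<and> balanced s"

definition rich_in :: "iword \<Rightarrow> letter list \<Rightarrow> letter \<Rightarrow> bool" where
  "rich_in s w z \<longleftrightarrow> w \<noteq> [] \<and> factor w s \<and>
      (\<exists>v. factor v s \<and> length v = length w \<and> cnt w z > cnt v z)"

text \<open>r_s(w): the (unique, for Sturmian s) letter in which w is rich.\<close>
definition rich_letter :: "iword \<Rightarrow> letter list \<Rightarrow> letter" where
  "rich_letter s w = (THE z. rich_in s w z)"

fun R :: "letter \<Rightarrow> letter list" where
  "R a = [a]"
| "R b = [b, a]"

definition pref :: "iword \<Rightarrow> nat \<Rightarrow> letter list" where
  "pref s n = map s [0..<n]"

text \<open>R(t) = s for infinite words: the image of every prefix of t is a prefix of s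
  (R is non-erasing, so this determines s).\<close>
definition R_image :: "iword \<Rightarrow> iword \<Rightarrow> bool" where
  "R_image t s \<longleftrightarrow> (\<forall>n. let w = concat (map R (pref t n)) in pref s (length w) = w)"

definition factorization :: "iword \<Rightarrow> (nat \<Rightarrow> letter list) \<Rightarrow> bool" where
  "factorization s U \<longleftrightarrow> (\<forall>i. U i \<noteq> []) \<and>
     (\<forall>n. let w = concat (map U [0..<n]) in pref s (length w) = w)"

end

theory Submission
  imports Defs
begin

text \<open>
  Work with the number of b's in windows of a word: a word is balanced iff any two windows of
  equal length contain numbers of b's differing by at most one. In \<open>s = R(t)\<close> every b is
  followed by an a, and a window of \<open>t\<close> of length \<open>n\<close> with \<open>k\<close> b's is sent to a
  window of \<open>s\<close> of length \<open>n + k\<close> with \<open>k\<close> b's. If another window of \<open>t\<close> of length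
  \<open>n\<close> had at least \<open>k + 2\<close> b's, its image cut down to length \<open>n + k + 1\<close> would still
  carry \<open>k + 2\<close> b's (the image ends in an a, and the cut part is at most half b's), so by
  balance every window of \<open>s\<close> of length \<open>n + k + 1\<close> would contain at least \<open>k + 1\<close> b's.
  This is contradicted by the a preceding the image of the poorer window, which exists unless
  the poorer window sits at position 0. That case is where the hypotheses enter: if \<open>t\<close>
  starts with b it reduces to position 1; otherwise the letter ending \<open>U\<^sub>1\<close> plays the role
  of the a, because the suffix of \<open>s\<close> after \<open>U\<^sub>1\<close> never has more b's than the
  corresponding prefix of \<open>s\<close> -- by b-richness of \<open>U\<^sub>1\<close>, or, if all \<open>U\<^sub>i\<close> are
  a-rich, block by block. Aperiodicity passes from \<open>s\<close> to \<open>t\<close> since \<open>R\<close> turns a period of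
  \<open>t\<close> into one of \<open>s\<close>.
\<close>

definition bcount :: "iword \<Rightarrow> nat \<Rightarrow> nat \<Rightarrow> nat" where
  "bcount s p L = cnt (map s [p..<p + L]) b"

lemma cnt_append: "cnt (u @ v) x = cnt u x + cnt v x"
  by (simp add: cnt_def)

lemma cnt_a_add_cnt_b: "cnt w a + cnt w b = length w"
proof (induction w)
  case (Cons x w)
  then show ?case by (cases x) (auto simp: cnt_def)
qed (simp add: cnt_def)

lemma bcount_add: "bcount s p (L1 + L2) = bcount s p L1 + bcount s (p + L1) L2"
  unfolding bcount_def
  using upt_add_eq_append[of p "p + L1" L2] by (simp add: cnt_append add.assoc)

lemma bcount_0 [simp]: "bcount s p 0 = 0"
  by (simp add: bcount_def cnt_def)

lemma bcount_Suc_0 [simp]: "bcount s p (Suc 0) = (if s p = b then 1 else 0)"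
  by (simp add: bcount_def cnt_def)

lemma bcount_Suc: "bcount s p (Suc L) = (if s p = b then 1 else 0) + bcount s (Suc p) L"
  using bcount_add[of s p 1 L] by simp

lemma bcount_Suc_right: "bcount s p (Suc L) = bcount s p L + (if s (p + L) = b then 1 else 0)"
  using bcount_add[of s p L 1] by simp

lemma bcount_le: "bcount s p L \<le> L"
  unfolding bcount_def cnt_def using length_filter_le[of "\<lambda>y. y = b" "map s [p..<p + L]"] by simp

lemma length_pref [simp]: "length (pref s l) = l"
  by (simp add: pref_def)

lemma cnt_pref_b: "cnt (pref s l) b = bcount s 0 l"
  by (simp add: pref_def bcount_def)

lemma factor_window: "factor (map s [i..<i + L]) s"
  unfolding factor_def by auto

lemma factor_pref: "factor (pref s l) s"
  using factor_window[of s 0 l] by (simp add: pref_def)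

lemma balanced_iff_bcount: "balanced s \<longleftrightarrow> (\<forall>p q L. bcount s p L \<le> bcount s q L + 1)"
proof
  assume "balanced s"
  show "\<forall>p q L. bcount s p L \<le> bcount s q L + 1"
  proof (intro allI)
    fix p q L
    have "\<bar>int (cnt (map s [p..<p + L]) b) - int (cnt (map s [q..<q + L]) b)\<bar> \<le> 1"
      using \<open>balanced s\<close> factor_window unfolding balanced_def by simp
    then show "bcount s p L \<le> bcount s q L + 1"
      unfolding bcount_def by linarith
  qed
next
  assume H: "\<forall>p q L. bcount s p L \<le> bcount s q L + 1"
  show "balanced s"
    unfolding balanced_def
  proof (intro allI impI)
    fix u v x assume u: "factor u s" and v: "factor v s" and l: "length u = length v"
    obtain i j where "cnt u b = bcount s i (length u)" "cnt v b = bcount s j (length u)"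
      using u v l unfolding factor_def bcount_def by metis
    then have b_le: "cnt u b \<le> cnt v b + 1" "cnt v b \<le> cnt u b + 1"
      using H by metis+
    have a_b: "cnt u a + cnt u b = cnt v a + cnt v b"
      using l by (simp add: cnt_a_add_cnt_b)
    show "\<bar>int (cnt u x) - int (cnt v x)\<bar> \<le> 1"
    proof (cases x)
      case a
      show ?thesis using b_le a_b unfolding a by linarith
    next
      case b
      show ?thesis using b_le unfolding b by linarith
    qed
  qed
qed

lemma bcount_const_imp_ult_periodic:
  assumes "0 < l" and const: "\<And>q. bcount s q l = c"
  shows "ult_periodic s"
proof -
  have "s (q + l) = s q" for q
  proof -
    have "(if s q = b then 1 else 0) + bcount s (Suc q) l
        = bcount s q l + (if s (q + l) = b then 1 else (0::nat))"
      using bcount_Suc[of s q l] bcount_Suc_right[of s q l] by simp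
    then have "(if s (q + l) = b then 1 else 0) = (if s q = b then 1 else (0::nat))"
      using const[of q] const[of "Suc q"] by simp
    then show ?thesis by (cases "s q"; cases "s (q + l)") auto
  qed
  then show ?thesis
    unfolding ult_periodic_def using assms(1) by blast
qed

lemma ex_factor_of_length:
  "(\<exists>v. factor v s \<and> length v = L \<and> P v) \<longleftrightarrow> (\<exists>q. P (map s [q..<q + L]))"
proof
  assume "\<exists>v. factor v s \<and> length v = L \<and> P v"
  then show "\<exists>q. P (map s [q..<q + L])"
    unfolding factor_def by metis
next
  assume "\<exists>q. P (map s [q..<q + L])"
  then show "\<exists>v. factor v s \<and> length v = L \<and> P v"
    using factor_window by fastforce
qed

lemma rich_in_b_iff:
  "rich_in s w b \<longleftrightarrow> w \<noteq> [] \<and> factor w s \<and> (\<exists>q. bcount s q (length w) < cnt w b)"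
  unfolding rich_in_def ex_factor_of_length bcount_def ..

lemma rich_in_a_iff:
  "rich_in s w a \<longleftrightarrow> w \<noteq> [] \<and> factor w s \<and> (\<exists>q. cnt w b < bcount s q (length w))"
proof -
  have "cnt v a < cnt w a \<longleftrightarrow> cnt w b < cnt v b" if "length v = length w" for v
    using that cnt_a_add_cnt_b[of v] cnt_a_add_cnt_b[of w] by linarith
  then have "(\<exists>v. factor v s \<and> length v = length w \<and> cnt v a < cnt w a)
      \<longleftrightarrow> (\<exists>v. factor v s \<and> length v = length w \<and> cnt w b < cnt v b)"
    by blast
  then show ?thesis
    unfolding rich_in_def ex_factor_of_length bcount_def by simp
qed

lemma rich_in_not_both: "balanced s \<Longrightarrow> \<not> (rich_in s w a \<and> rich_in s w b)"
proof
  assume "balanced s" and "rich_in s w a \<and> rich_in s w b"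
  then obtain p q where "cnt w b < bcount s p (length w)" "bcount s q (length w) < cnt w b"
    unfolding rich_in_a_iff rich_in_b_iff by blast
  moreover have "bcount s p (length w) \<le> bcount s q (length w) + 1"
    using \<open>balanced s\<close> unfolding balanced_iff_bcount by blast
  ultimately show False by linarith
qed

lemma sturmian_rich_in_a_or_b:
  assumes "sturmian s" "factor w s" "w \<noteq> []"
  shows "rich_in s w a \<or> rich_in s w b"
proof -
  obtain q where "bcount s q (length w) \<noteq> cnt w b"
    using bcount_const_imp_ult_periodic[of "length w" s "cnt w b"] assms
    unfolding sturmian_def by auto
  then show ?thesis
    using assms(2,3) unfolding rich_in_a_iff rich_in_b_iff by (meson nat_neq_iff)
qed

lemma rich_in_rich_letter:
  assumes "sturmian s" "factor w s" "w \<noteq> []"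
  shows "rich_in s w (rich_letter s w)"
  unfolding rich_letter_def
proof (rule theI')
  show "\<exists>!z. rich_in s w z"
  proof (rule ex_ex1I)
    show "\<exists>z. rich_in s w z"
      using sturmian_rich_in_a_or_b[OF assms] by blast
  next
    fix y z assume "rich_in s w y" "rich_in s w z"
    then show "y = z"
      using rich_in_not_both[of s w] assms(1) by (cases y; cases z) (auto simp: sturmian_def)
  qed
qed

lemma rich_in_b_bcount_le:
  assumes "balanced s" "rich_in s w b"
  shows "bcount s p (length w) \<le> cnt w b"
proof -
  obtain q where "bcount s q (length w) < cnt w b"
    using assms(2) unfolding rich_in_b_iff by blast
  moreover have "bcount s p (length w) \<le> bcount s q (length w) + 1"
    using assms(1) unfolding balanced_iff_bcount by blast
  ultimately show ?thesis by linarith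
qed

lemma rich_in_a_bcount_ge:
  assumes "balanced s" "rich_in s w a"
  shows "cnt w b \<le> bcount s p (length w)"
proof -
  obtain q where "cnt w b < bcount s q (length w)"
    using assms(2) unfolding rich_in_a_iff by blast
  moreover have "bcount s q (length w) \<le> bcount s p (length w) + 1"
    using assms(1) unfolding balanced_iff_bcount by blast
  ultimately show ?thesis by linarith
qed

lemma bcount_after_b_rich_prefix_le:
  assumes "balanced s" "rich_in s (pref s l) b"
  shows "bcount s l L \<le> bcount s 0 L"
proof -
  have "bcount s 0 l + bcount s l L = bcount s 0 L + bcount s L l"
    using bcount_add[of s 0 l L] bcount_add[of s 0 L l] by (simp add: add.commute)
  moreover have "bcount s L l \<le> bcount s 0 l"
    using rich_in_b_bcount_le[OF assms, of L] by (simp add: cnt_pref_b)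
  ultimately show ?thesis by simp
qed

lemma factorization_nth:
  assumes "factorization s U" "r < length (U j)"
  shows "s (length (concat (map U [0..<j])) + r) = U j ! r"
proof -
  have "pref s (length (concat (map U [0..<Suc j]))) = concat (map U [0..<Suc j])"
    using assms(1) unfolding factorization_def Let_def by blast
  then have "pref s (length (concat (map U [0..<j])) + length (U j)) = concat (map U [0..<j]) @ U j"
    by simp
  moreover have "s (length (concat (map U [0..<j])) + r)
      = pref s (length (concat (map U [0..<j])) + length (U j)) ! (length (concat (map U [0..<j])) + r)"
    using assms(2) by (simp add: pref_def)
  ultimately show ?thesis by simp
qed

lemma bcount_after_a_rich_factorization_le:
  assumes bal: "balanced s" and fac: "factorization s U"
    and pref: "\<And>i. pref s (length (U i)) = U i" and rich: "\<And>i. rich_in s (U i) a"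
  shows "bcount s (length (concat (map U [0..<j]))) L \<le> bcount s 0 L"
proof (induction L arbitrary: j rule: less_induct)
  case (less L)
  define N where "N = length (concat (map U [0..<j]))"
  define l where "l = length (U j)"
  have block: "bcount s N L' = bcount s 0 L'" if "L' \<le> l" for L'
  proof -
    have "map s [N..<N + L'] = map s [0..<L']"
    proof (rule nth_equalityI)
      fix r assume "r < length (map s [N..<N + L'])"
      then have "r < l" using that by simp
      then have "s (N + r) = U j ! r"
        using factorization_nth[OF fac] unfolding N_def l_def by blast
      also have "\<dots> = pref s l ! r"
        using pref[of j] unfolding l_def by simp
      also have "\<dots> = s r"
        using \<open>r < l\<close> by (simp add: pref_def)
      finally have "s (N + r) = s r" .
      then show "map s [N..<N + L'] ! r = map s [0..<L'] ! r"
        using \<open>r < length _\<close> by simp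
    qed simp
    then show ?thesis by (simp add: bcount_def)
  qed
  show ?case
  proof (cases "L \<le> l")
    case True
    then show ?thesis using block unfolding N_def by simp
  next
    case False
    define L' where "L' = L - l"
    have L: "L = l + L'" and "L' < L"
      using False rich[of j] unfolding L'_def l_def rich_in_def by auto
    have "bcount s N L = bcount s N l + bcount s (length (concat (map U [0..<Suc j]))) L'"
      unfolding L bcount_add N_def l_def by simp
    also have "\<dots> \<le> bcount s 0 l + bcount s 0 L'"
      using block[of l] less[OF \<open>L' < L\<close>, of "Suc j"] by simp
    also have "\<dots> \<le> bcount s L' l + bcount s 0 L'"
      using rich_in_a_bcount_ge[OF bal rich[of j], of L'] cnt_pref_b[of s l]
      unfolding l_def pref[of j] by simp
    also have "\<dots> = bcount s 0 L"
      unfolding L using bcount_add[of s 0 L' l] by (simp add: add.commute)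
    finally show ?thesis unfolding N_def .
  qed
qed

definition R_pos :: "iword \<Rightarrow> nat \<Rightarrow> nat" where
  "R_pos t n = length (concat (map R (pref t n)))"

lemma length_R: "length (R x) = (if x = b then 2 else 1)"
  by (cases x) auto

lemma R_pos_0 [simp]: "R_pos t 0 = 0"
  by (simp add: R_pos_def pref_def)

lemma R_pos_Suc: "R_pos t (Suc n) = R_pos t n + length (R (t n))"
  by (simp add: R_pos_def pref_def)

lemma R_pos_add: "R_pos t (n + m) = R_pos t n + m + bcount t n m"
  by (induction m) (simp_all add: R_pos_Suc length_R bcount_Suc_right)

lemma R_pos_mono: "n \<le> n' \<Longrightarrow> R_pos t n \<le> R_pos t n'"
  using R_pos_add[of t n "n' - n"] by simp

lemma R_image_nth:
  assumes "R_image t s" "r < length (R (t n))"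
  shows "s (R_pos t n + r) = R (t n) ! r"
proof -
  have "pref s (R_pos t (Suc n)) = concat (map R (pref t (Suc n)))"
    using assms(1) unfolding R_image_def Let_def R_pos_def by blast
  then have "pref s (R_pos t n + length (R (t n))) = concat (map R (pref t n)) @ R (t n)"
    by (simp add: R_pos_Suc pref_def)
  moreover have "s (R_pos t n + r) = pref s (R_pos t n + length (R (t n))) ! (R_pos t n + r)"
    using assms(2) by (simp add: pref_def)
  ultimately show ?thesis
    by (simp add: nth_append R_pos_def)
qed

lemma R_pos_cover: "\<exists>n r. r < length (R (t n)) \<and> q = R_pos t n + r"
proof (induction q)
  case 0
  show ?case by (intro exI[of _ 0]) (simp add: length_R)
next
  case (Suc q)
  then obtain n r where nr: "r < length (R (t n))" "q = R_pos t n + r" by blast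
  show ?case
  proof (cases "Suc r < length (R (t n))")
    case True
    then show ?thesis using nr by (intro exI[of _ n] exI[of _ "Suc r"]) auto
  next
    case False
    then have "Suc q = R_pos t (Suc n)" using nr by (simp add: R_pos_Suc length_R)
    then show ?thesis by (intro exI[of _ "Suc n"] exI[of _ 0]) (simp add: length_R)
  qed
qed

lemma R_image_b_imp_Suc_a:
  assumes "R_image t s" "s q = b"
  shows "s (Suc q) = a"
proof -
  obtain n r where nr: "r < length (R (t n))" "q = R_pos t n + r"
    using R_pos_cover by blast
  then have "R (t n) ! r = b" using R_image_nth[OF assms(1)] assms(2) by simp
  then have "t n = b \<and> r = 0" using nr(1) by (cases "t n"; cases r) auto
  then show ?thesis using R_image_nth[OF assms(1), of 1 n] nr by simp
qed

lemma R_image_bcount_le_half: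
  assumes "R_image t s"
  shows "bcount s p d \<le> (d + 1) div 2"
proof (induction d arbitrary: p rule: less_induct)
  case (less d)
  show ?case
  proof (cases "d < 2")
    case True
    then show ?thesis using bcount_le[of s p d] by (cases d) auto
  next
    case False
    then obtain e where d: "d = e + 2" by (metis add.commute le_Suc_ex not_less)
    have "bcount s (p + e) 2 \<le> 1"
      using R_image_b_imp_Suc_a[OF assms, of "p + e"]
      by (simp add: bcount_Suc numeral_2_eq_2)
    then have "bcount s p d \<le> (e + 1) div 2 + 1"
      using less[of e p] bcount_add[of s p e 2] d by simp
    then show ?thesis using d by simp
  qed
qed

lemma R_image_bcount_R_pos:
  assumes "R_image t s"
  shows "bcount s (R_pos t n) (m + bcount t n m) = bcount t n m"
proof (induction m)
  case (Suc m)
  have block: "bcount s (R_pos t (n + m)) (length (R (t (n + m)))) = (if t (n + m) = b then 1 else 0)"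
    using R_image_nth[OF assms, of 0 "n + m"] R_image_nth[OF assms, of 1 "n + m"]
    by (cases "t (n + m)") (auto simp: bcount_Suc numeral_2_eq_2)
  have "Suc m + bcount t n (Suc m) = (m + bcount t n m) + length (R (t (n + m)))"
    by (simp add: bcount_Suc_right length_R)
  then have "bcount s (R_pos t n) (Suc m + bcount t n (Suc m))
      = bcount s (R_pos t n) (m + bcount t n m) + bcount s (R_pos t (n + m)) (length (R (t (n + m))))"
    using bcount_add R_pos_add[of t n m] by (simp only: add.assoc)
  then show ?case
    using Suc block by (simp add: bcount_Suc_right)
qed simp

lemma R_image_a_before_R_pos:
  assumes "R_image t s" "0 < i"
  shows "s (R_pos t i - 1) = a"
proof -
  obtain i' where i: "i = Suc i'" using assms(2) by (cases i) auto
  have "R_pos t i - 1 = R_pos t i' + (length (R (t i')) - 1)"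
    by (simp add: i R_pos_Suc length_R)
  moreover have "s (R_pos t i' + (length (R (t i')) - 1)) = a"
    using R_image_nth[OF assms(1), of "length (R (t i')) - 1" i'] by (cases "t i'") auto
  ultimately show ?thesis by simp
qed

lemma R_image_not_ult_periodic:
  assumes R: "R_image t s" and "\<not> ult_periodic s"
  shows "\<not> ult_periodic t"
proof
  assume "ult_periodic t"
  then obtain p N where "p > 0" and per: "\<And>n. N \<le> n \<Longrightarrow> t (n + p) = t n"
    unfolding ult_periodic_def by blast
  define P where "P = R_pos t (N + p) - R_pos t N"
  have "P > 0" using R_pos_add[of t N p] \<open>p > 0\<close> by (simp add: P_def)
  have shift: "R_pos t (n + p) = R_pos t n + P" if "N \<le> n" for n
    using that
  proof (induction n rule: dec_induct)
    case base
    then show ?case using R_pos_mono[of N "N + p" t] by (simp add: P_def)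
  next
    case (step n)
    then show ?case using per[of n] by (simp add: R_pos_Suc)
  qed
  have "s (q + P) = s q" if "R_pos t N \<le> q" for q
  proof -
    obtain n r where nr: "r < length (R (t n))" "q = R_pos t n + r"
      using R_pos_cover by blast
    have "N \<le> n"
    proof (rule ccontr)
      assume "\<not> N \<le> n"
      then have "R_pos t (Suc n) \<le> R_pos t N" using R_pos_mono[of "Suc n" N t] by simp
      then show False using nr that by (simp add: R_pos_Suc)
    qed
    then have "t (n + p) = t n" by (rule per)
    then show ?thesis
      using shift[OF \<open>N \<le> n\<close>] R_image_nth[OF R] nr by (metis add.commute add.left_commute)
  qed
  then have "ult_periodic s"
    unfolding ult_periodic_def using \<open>P > 0\<close> by blast
  with assms(2) show False ..
qed

lemma R_image_bcount_gap:
  assumes R: "R_image t s" and gap: "bcount t i n + 2 \<le> bcount t j n"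
  shows "bcount t i n + 2 \<le> bcount s (R_pos t j) (n + bcount t i n + 1)"
proof -
  define k where "k = bcount t i n"
  define k' where "k' = bcount t j n"
  have kk: "k + 2 \<le> k'" using gap by (simp add: k_def k'_def)
  have "0 < n" using kk bcount_le[of t j n] by (simp add: k'_def)
  have image: "bcount s (R_pos t j) (n + k') = k'"
    using R_image_bcount_R_pos[OF R, of j n] by (simp add: k'_def)
  have "s (R_pos t j + (n + k' - 1)) = a"
    using R_image_a_before_R_pos[OF R, of "j + n"] R_pos_add[of t j n] \<open>0 < n\<close>
    by (simp add: k'_def add.assoc)
  then have "bcount s (R_pos t j) (n + k' - 1) = k'"
    using image bcount_Suc_right[of s "R_pos t j" "n + k' - 1"] \<open>0 < n\<close> by simp
  moreover have "n + k' - 1 = (n + k + 1) + (k' - k - 2)"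
    using kk \<open>0 < n\<close> by simp
  then have "bcount s (R_pos t j) (n + k' - 1)
      = bcount s (R_pos t j) (n + k + 1) + bcount s (R_pos t j + (n + k + 1)) (k' - k - 2)"
    by (simp only: bcount_add)
  moreover have "bcount s (R_pos t j + (n + k + 1)) (k' - k - 2) \<le> (k' - k - 1) div 2"
    using R_image_bcount_le_half[OF R, of _ "k' - k - 2"] kk by (simp add: Suc_diff_Suc)
  ultimately have "k' \<le> bcount s (R_pos t j) (n + k + 1) + (k' - k - 1) div 2"
    by simp
  moreover have "2 * ((k' - k - 1) div 2) \<le> k' - k - 1"
    by simp
  ultimately have "k + 2 \<le> bcount s (R_pos t j) (n + k + 1)"
    using kk by linarith
  then show ?thesis by (simp add: k_def)
qed

lemma R_image_bcount_gap_all: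
  assumes "balanced s" "R_image t s" "bcount t i n + 2 \<le> bcount t j n"
  shows "bcount t i n + 1 \<le> bcount s p (n + bcount t i n + 1)"
proof -
  have "bcount s (R_pos t j) (n + bcount t i n + 1) \<le> bcount s p (n + bcount t i n + 1) + 1"
    using assms(1) unfolding balanced_iff_bcount by blast
  then show ?thesis
    using R_image_bcount_gap[OF assms(2,3)] by linarith
qed

lemma R_image_bcount_le_Suc:
  assumes bal: "balanced s" and R: "R_image t s" and "0 < i"
  shows "bcount t j n \<le> bcount t i n + 1"
proof (rule ccontr)
  assume "\<not> ?thesis"
  then have gap: "bcount t i n + 2 \<le> bcount t j n" by simp
  define k where "k = bcount t i n"
  have "0 < R_pos t i" using R_pos_add[of t 0 i] \<open>0 < i\<close> by simp
  then have "bcount s (R_pos t i - 1) (n + k + 1) = bcount s (R_pos t i) (n + k)"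
    using bcount_Suc[of s "R_pos t i - 1" "n + k"] R_image_a_before_R_pos[OF R \<open>0 < i\<close>] by simp
  also have "\<dots> = k"
    using R_image_bcount_R_pos[OF R, of i n] by (simp add: k_def)
  finally show False
    using R_image_bcount_gap_all[OF bal R gap, of "R_pos t i - 1"] by (simp add: k_def)
qed

lemma R_image_bcount_le_Suc_of_first_b:
  assumes "balanced s" "R_image t s" "t 0 = b"
  shows "bcount t j n \<le> bcount t 0 n + 1"
proof (cases n)
  case (Suc n')
  have "bcount t (Suc j) n' \<le> bcount t 1 n' + 1"
    using R_image_bcount_le_Suc[OF assms(1,2)] by simp
  then show ?thesis
    using bcount_Suc[of t j n'] bcount_Suc[of t 0 n'] assms(3) Suc by simp
qed simp

lemma R_image_bcount_le_Suc_of_dominated: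
  assumes bal: "balanced s" and R: "R_image t s"
    and "s P = a" and dominated: "\<And>L. bcount s (Suc P) L \<le> bcount s 0 L"
  shows "bcount t j n \<le> bcount t 0 n + 1"
proof (rule ccontr)
  assume "\<not> ?thesis"
  then have gap: "bcount t 0 n + 2 \<le> bcount t j n" by simp
  define k where "k = bcount t 0 n"
  have "bcount s 0 (n + k) = k"
    using R_image_bcount_R_pos[OF R, of 0 n] by (simp add: k_def)
  moreover have "k + 1 \<le> bcount s (Suc P) (n + k)"
    using R_image_bcount_gap_all[OF bal R gap, of P] bcount_Suc[of s P "n + k"] \<open>s P = a\<close>
    by (simp add: k_def)
  ultimately show False using dominated[of "n + k"] by simp
qed

lemma rich_prefix_factorization_dominated:
  assumes S: "sturmian s" and fac: "factorization s U"
    and U: "\<forall>i. U i \<noteq> [] \<and> pref s (length (U i)) = U i \<and> last (U i) = a"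
    and same: "\<forall>i j. rich_letter s (U i) = rich_letter s (U j)"
  obtains P where "s P = a" "\<And>L. bcount s (Suc P) L \<le> bcount s 0 L"
proof
  have bal: "balanced s" using S by (simp add: sturmian_def)
  have pref: "pref s (length (U i)) = U i" for i using U by blast
  define z where "z = rich_letter s (U 0)"
  have rich: "rich_in s (U i) z" for i
    using rich_in_rich_letter[OF S, of "U i"] factor_pref[of s "length (U i)"] U same
    unfolding z_def by metis
  define P where "P = length (U 0) - 1"
  have "0 < length (U 0)" using U by simp
  moreover have "last (pref s (length (U 0))) = a"
    using U pref[of 0] by simp
  ultimately show "s P = a"
    by (simp add: P_def pref_def last_conv_nth)
  have Suc_P: "Suc P = length (concat (map U [0..<1]))"
    using \<open>0 < length (U 0)\<close> by (simp add: P_def)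
  show "bcount s (Suc P) L \<le> bcount s 0 L" for L
  proof (cases z)
    case a
    then show ?thesis
      using bcount_after_a_rich_factorization_le[OF bal fac pref, of 1] rich Suc_P by simp
  next
    case b
    then show ?thesis
      using bcount_after_b_rich_prefix_le[OF bal, of "length (U 0)"] rich[of 0] pref[of 0] Suc_P
      by simp
  qed
qed

theorem mainTheorem3:
  fixes s t :: iword
  assumes "sturmian s"
    and "R_image t s"
    and "t 0 = b \<or>
         (\<exists>U. factorization s U \<and>
              (\<forall>i. U i \<noteq> [] \<and> pref s (length (U i)) = U i \<and> last (U i) = a) \<and>
              (\<forall>i j. rich_letter s (U i) = rich_letter s (U j)))"
  shows "sturmian t"
proof -
  have bal: "balanced s" and aper: "\<not> ult_periodic s"
    using assms(1) by (simp_all add: sturmian_def)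
  have first: "bcount t j n \<le> bcount t 0 n + 1" for j n
    using assms(3)
  proof
    assume "t 0 = b"
    then show ?thesis by (rule R_image_bcount_le_Suc_of_first_b[OF bal assms(2)])
  next
    assume "\<exists>U. factorization s U \<and>
              (\<forall>i. U i \<noteq> [] \<and> pref s (length (U i)) = U i \<and> last (U i) = a) \<and>
              (\<forall>i j. rich_letter s (U i) = rich_letter s (U j))"
    then obtain P where "s P = a" "\<And>L. bcount s (Suc P) L \<le> bcount s 0 L"
      using rich_prefix_factorization_dominated[OF assms(1)] by blast
    then show ?thesis by (rule R_image_bcount_le_Suc_of_dominated[OF bal assms(2)])
  qed
  have "bcount t j n \<le> bcount t i n + 1" for i j n
    using first R_image_bcount_le_Suc[OF bal assms(2)] by (cases i) auto
  then have "balanced t" by (simp add: balanced_iff_bcount)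
  moreover have "\<not> ult_periodic t" by (rule R_image_not_ult_periodic[OF assms(2) aper])
  ultimately show ?thesis by (simp add: sturmian_def)
qed

end
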